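(* Let $r\ge1$, $n$ be integers and let $\sigma,\sigma':\mathbb{Z}_n\to\{0,1\}$ be a temporally periodic pair, with block-length vectors $\vec v$ and $\vec v'$ respectively. Then $|\vec v|=|\vec v'|$, i.e. $|B(\sigma)|=|B(\sigma')|$.
   Context: Cells are elements of $\mathbb{Z}_n$, arithmetic mod $n$; $[a,b]$ denotes the cyclic interval $a,\dots,b$. The majority rule with radius $r$: $\mathrm{maj}_r(\sigma)(i)=0$ if among the cells of $[i-r,i+r]$ strictly more have value $0$ than $1$ under $\sigma$, and $=1$ otherwise. A temporally periodic pair is a pair with $\mathrm{maj}_r(\sigma)=\sigma'$ and $\mathrm{maj}_r(\sigma')=\sigma$. For $\beta\in\{0,1\}$, $B^\beta(\sigma)$ is the set of cell intervals $[i,j]$ with $\sigma(k)=\beta$ for all $k\in[i,j]$ and $\sigma(i-1)=\sigma(j+1)=1-\beta$; $B(\sigma)=B^0(\sigma)\cup B^1(\sigma)$. The block-length vector of $\sigma$ is the cyclic sequence of lengths of the blocks in $B(\sigma)$ listed in their cyclic order; its length $|\vec v|$ is the number of entries, $|B(\sigma)|$. *)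

theory Defs
  imports Main
begin

text \<open>Configurations on Z_n are modelled as functions int => bool (True = 1, False = 0);
  only the values on representatives i mod n are ever consulted.\<close>

definition maj :: "int \<Rightarrow> int \<Rightarrow> (int \<Rightarrow> bool) \<Rightarrow> int \<Rightarrow> bool" where
  "maj r n \<sigma> i =
     (if card {k \<in> {-r..r}. \<not> \<sigma> ((i + k) mod n)} > card {k \<in> {-r..r}. \<sigma> ((i + k) mod n)}
      then False else True)"

definition tp_pair :: "int \<Rightarrow> int \<Rightarrow> (int \<Rightarrow> bool) \<Rightarrow> (int \<Rightarrow> bool) \<Rightarrow> bool" where
  "tp_pair r n \<sigma> \<sigma>' \<longleftrightarrow>
     (\<forall>i\<in>{0..<n}. maj r n \<sigma> i = \<sigma>' i) \<and> (\<forall>i\<in>{0..<n}. maj r n \<sigma>' i = \<sigma> i)"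

text \<open>B^beta(sigma): cyclic intervals [i,j] (i, j in Z_n, cells i, i+1, ..., j) that are
  monochromatic of colour beta and bounded on both sides by the other colour.\<close>
definition blocks :: "int \<Rightarrow> bool \<Rightarrow> (int \<Rightarrow> bool) \<Rightarrow> (int \<times> int) set" where
  "blocks n \<beta> \<sigma> = {(i, j). i \<in> {0..<n} \<and> j \<in> {0..<n} \<and>
      (\<forall>k\<in>{0..(j - i) mod n}. \<sigma> ((i + k) mod n) = \<beta>) \<and>
      \<sigma> ((i - 1) mod n) = (\<not> \<beta>) \<and> \<sigma> ((j + 1) mod n) = (\<not> \<beta>)}"

definition all_blocks :: "int \<Rightarrow> (int \<Rightarrow> bool) \<Rightarrow> (int \<times> int) set" where
  "all_blocks n \<sigma> = blocks n False \<sigma> \<union> blocks n True \<sigma>"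

end

theory Submission
  imports Defs
begin

text \<open>For each colour \<beta>, one majority step never increases the number of \<beta>-blocks; applied
  in both directions of a temporally periodic pair this forces equality, colour by colour.
  To compare the counts, send every block start \<open>a\<close> of \<open>maj\<^sub>r \<sigma>\<close> to the start of the \<beta>-block
  of \<open>\<sigma>\<close> containing cell \<open>a + r\<close>: as the window slides from \<open>a - 1\<close> to \<open>a\<close>, the majority can only
  switch to \<beta> if the cell entering at \<open>a + r\<close> has colour \<beta> and the cell leaving at
  \<open>a - 1 - r\<close> does not. The map is injective because between two block starts of
  \<open>maj\<^sub>r \<sigma>\<close> the majority has to switch away from \<beta> again, which puts a non-\<beta> cell of \<open>\<sigma>\<close>
  between the two cells \<open>a + r\<close>.\<close>

definition spin :: "bool \<Rightarrow> int" where
  "spin b = (if b then 1 else - 1)"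

definition window_balance :: "int \<Rightarrow> int \<Rightarrow> (int \<Rightarrow> bool) \<Rightarrow> int \<Rightarrow> int" where
  "window_balance r n \<sigma> i = (\<Sum>j = i - r..i + r. spin (\<sigma> (j mod n)))"

lemma maj_iff_window_balance_nonneg: "maj r n \<sigma> i \<longleftrightarrow> 0 \<le> window_balance r n \<sigma> i"
proof -
  let ?W = "{- r..r}"
  have "window_balance r n \<sigma> i = (\<Sum>k\<in>?W. spin (\<sigma> ((i + k) mod n)))"
    unfolding window_balance_def
    using sum.reindex[of "plus i" ?W "\<lambda>j. spin (\<sigma> (j mod n))"]
    by (simp add: algebra_simps)
  also have "\<dots> = int (card {k \<in> ?W. \<sigma> ((i + k) mod n)}) - int (card {k \<in> ?W. \<not> \<sigma> ((i + k) mod n)})"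
    by (simp add: spin_def sum.If_cases Int_def conj_commute)
  finally show ?thesis unfolding maj_def by simp
qed

lemma window_balance_succ:
  assumes "r \<ge> 0"
  shows "window_balance r n \<sigma> (i + 1)
       = window_balance r n \<sigma> i + spin (\<sigma> ((i + r + 1) mod n)) - spin (\<sigma> ((i - r) mod n))"
proof -
  let ?v = "\<lambda>j. spin (\<sigma> (j mod n))"
  have "{i - r..i + r + 1} = insert (i - r) {i + 1 - r..i + 1 + r}" using assms by auto
  then have "sum ?v {i - r..i + r + 1} = ?v (i - r) + sum ?v {i + 1 - r..i + 1 + r}" by simp
  moreover have "{i - r..i + r + 1} = insert (i + r + 1) {i - r..i + r}" using assms by auto
  then have "sum ?v {i - r..i + r + 1} = ?v (i + r + 1) + sum ?v {i - r..i + r}" by simp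
  ultimately show ?thesis unfolding window_balance_def by (simp add: algebra_simps)
qed

lemma spin_sign_change:
  fixes x :: int
  assumes "(0 \<le> x) \<noteq> (0 \<le> x + spin b - spin b')"
  shows "b' = (0 \<le> x)" and "b = (0 \<le> x + spin b - spin b')"
  using assms by (cases "0 \<le> x"; cases b; cases b'; simp add: spin_def)+

lemma maj_flip_boundary_cells:
  assumes "r \<ge> 0" and "maj r n \<sigma> c \<noteq> maj r n \<sigma> (c + 1)"
  shows "\<sigma> ((c - r) mod n) = maj r n \<sigma> c" and "\<sigma> ((c + r + 1) mod n) = maj r n \<sigma> (c + 1)"
proof -
  note w = window_balance_succ[OF assms(1), of n \<sigma> c]
  have flip: "(0 \<le> window_balance r n \<sigma> c) \<noteq>
      (0 \<le> window_balance r n \<sigma> c + spin (\<sigma> ((c + r + 1) mod n)) - spin (\<sigma> ((c - r) mod n)))"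
    using assms(2) unfolding maj_iff_window_balance_nonneg w .
  show "\<sigma> ((c - r) mod n) = maj r n \<sigma> c"
    using spin_sign_change(1)[OF flip] unfolding maj_iff_window_balance_nonneg .
  show "\<sigma> ((c + r + 1) mod n) = maj r n \<sigma> (c + 1)"
    using spin_sign_change(2)[OF flip] unfolding maj_iff_window_balance_nonneg w .
qed

lemma maj_mod [simp]: "maj r n \<sigma> (i mod n) = maj r n \<sigma> i"
  unfolding maj_def by (simp add: mod_add_left_eq)

lemma maj_add_mult: "maj r n \<sigma> (i + k * n) = maj r n \<sigma> i"
  by (metis maj_mod mod_mult_self1)

lemma int_first_exit:
  fixes a b :: int
  assumes "a \<le> b" and "P a" and "\<not> P b"
  obtains m where "a \<le> m" "m < b" "\<forall>k\<in>{a..m}. P k" "\<not> P (m + 1)"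
proof -
  define t where "t = (LEAST t. \<not> P (a + int t))"
  have "\<not> P (a + int (nat (b - a)))" using assms by simp
  then have exit: "\<not> P (a + int t)" and le: "t \<le> nat (b - a)"
    unfolding t_def by (fact LeastI, fact Least_le)
  have stay: "P (a + int s)" if "s < t" for s
    using not_less_Least[OF that[unfolded t_def]] by simp
  have "t \<noteq> 0" using exit assms(2) by (metis add.right_neutral of_nat_0)
  show ?thesis
  proof
    show "a \<le> a + int t - 1" "a + int t - 1 < b" "\<not> P (a + int t - 1 + 1)"
      using \<open>t \<noteq> 0\<close> le exit assms(1,3) by auto
    show "\<forall>k\<in>{a..a + int t - 1}. P k"
    proof
      fix k assume k: "k \<in> {a..a + int t - 1}"
      then have "nat (k - a) < t" by auto
      then show "P k" using stay[of "nat (k - a)"] k by simp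
    qed
  qed
qed

lemma int_last_entry:
  fixes a b :: int
  assumes "a \<le> b" and "\<not> P a" and "P b"
  obtains p where "a < p" "p \<le> b" "\<forall>k\<in>{p..b}. P k" "\<not> P (p - 1)"
proof -
  obtain m where m: "- b \<le> m" "m < - a" "\<forall>k\<in>{- b..m}. P (- k)" "\<not> P (- (m + 1))"
    using int_first_exit[of "- b" "- a" "\<lambda>k. P (- k)"] assms by auto
  show ?thesis
  proof (rule that[of "- m"])
    show "\<forall>k\<in>{- m..b}. P k"
    proof
      fix k assume "k \<in> {- m..b}"
      then have "- k \<in> {- b..m}" by auto
      then show "P k" using m(3) by fastforce
    qed
  qed (use m(1,2,4) in auto)
qed

lemma maj_switch_covered_by_run:
  assumes "r \<ge> 0" and "maj r n \<sigma> (a - 1) \<noteq> \<beta>" and "maj r n \<sigma> a = \<beta>"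
  obtains p where "p \<le> a + r" "\<forall>k\<in>{p..a + r}. \<sigma> (k mod n) = \<beta>" "\<sigma> ((p - 1) mod n) \<noteq> \<beta>"
proof -
  have flip: "maj r n \<sigma> (a - 1) \<noteq> maj r n \<sigma> (a - 1 + 1)" using assms(2,3) by simp
  have "a - 1 - r \<le> a + r" using assms(1) by simp
  moreover have "\<sigma> ((a - 1 - r) mod n) \<noteq> \<beta>"
    using maj_flip_boundary_cells(1)[OF assms(1) flip] assms(2) by simp
  moreover have "\<sigma> ((a + r) mod n) = \<beta>"
    using maj_flip_boundary_cells(2)[OF assms(1) flip] assms(3) by (simp add: add.commute add.left_commute)
  ultimately obtain p where "a - 1 - r < p" "p \<le> a + r" "\<forall>k\<in>{p..a + r}. \<sigma> (k mod n) = \<beta>"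
      "\<sigma> ((p - 1) mod n) \<noteq> \<beta>"
    by (rule int_last_entry[where P = "\<lambda>k. \<sigma> (k mod n) = \<beta>"])
  then show ?thesis using that by blast
qed

lemma maj_leaving_colour_breaks_run:
  assumes "r \<ge> 0" and "a < b" and "maj r n \<sigma> a = \<beta>" and "maj r n \<sigma> (b - 1) \<noteq> \<beta>"
    and "p \<le> a + r"
  shows "\<exists>k\<in>{p..b + r}. \<sigma> (k mod n) \<noteq> \<beta>"
proof -
  have "a \<le> b - 1" using assms(2) by simp
  then obtain c where c: "a \<le> c" "c < b - 1" "\<forall>k\<in>{a..c}. maj r n \<sigma> k = \<beta>"
      "maj r n \<sigma> (c + 1) \<noteq> \<beta>"
    using assms(3,4) by (rule int_first_exit[where P = "\<lambda>k. maj r n \<sigma> k = \<beta>"])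
  then have "maj r n \<sigma> c \<noteq> maj r n \<sigma> (c + 1)" by simp
  then have "\<sigma> ((c + r + 1) mod n) = maj r n \<sigma> (c + 1)"
    by (rule maj_flip_boundary_cells(2)[OF assms(1)])
  moreover have "c + r + 1 \<in> {p..b + r}" using c(1,2) assms(5) by simp
  ultimately show ?thesis using c(4) by (intro bexI[of _ "c + r + 1"]) simp_all
qed

definition block_starts :: "int \<Rightarrow> bool \<Rightarrow> (int \<Rightarrow> bool) \<Rightarrow> int set" where
  "block_starts n \<beta> \<sigma> = {i \<in> {0..<n}. \<sigma> i = \<beta> \<and> \<sigma> ((i - 1) mod n) \<noteq> \<beta>}"

lemma finite_block_starts: "finite (block_starts n \<beta> \<sigma>)"
  unfolding block_starts_def by (rule finite_subset[of _ "{0..<n}"]) auto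

lemma maj_block_starts_not_in_one_run:
  assumes "r \<ge> 0" and a: "a \<in> block_starts n \<beta> (maj r n \<sigma>)" and b: "b \<in> block_starts n \<beta> (maj r n \<sigma>)"
    and "p \<le> a + r" and run: "\<forall>k\<in>{p + m * n..b + r}. \<sigma> (k mod n) = \<beta>"
  shows "b - m * n \<le> a"
proof (rule ccontr)
  assume "\<not> b - m * n \<le> a"
  then have less: "a < b - m * n" by simp
  have "maj r n \<sigma> a = \<beta>" using a by (simp add: block_starts_def)
  moreover have "maj r n \<sigma> (b - m * n - 1) \<noteq> \<beta>"
    using b maj_mod[of r n \<sigma> "b - 1"] maj_add_mult[of r n \<sigma> "b - m * n - 1" m]
    by (simp add: block_starts_def)
  ultimately obtain c where c: "c \<in> {p..b - m * n + r}" "\<sigma> (c mod n) \<noteq> \<beta>"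
    using maj_leaving_colour_breaks_run[OF assms(1) less _ _ assms(4)] by blast
  then have "c + m * n \<in> {p + m * n..b + r}" by auto
  then have "\<sigma> ((c + m * n) mod n) = \<beta>" using run by blast
  then show False using c(2) by simp
qed

lemma card_block_starts_maj_le:
  assumes "r \<ge> 0" and "n \<ge> 1"
  shows "card (block_starts n \<beta> (maj r n \<sigma>)) \<le> card (block_starts n \<beta> \<sigma>)"
proof -
  let ?S = "block_starts n \<beta> (maj r n \<sigma>)"
  let ?run = "\<lambda>a p. p \<le> a + r \<and> (\<forall>k\<in>{p..a + r}. \<sigma> (k mod n) = \<beta>) \<and> \<sigma> ((p - 1) mod n) \<noteq> \<beta>"
  have "\<forall>a\<in>?S. \<exists>p. ?run a p"
  proof
    fix a assume "a \<in> ?S"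
    then have "maj r n \<sigma> (a - 1) \<noteq> \<beta>" "maj r n \<sigma> a = \<beta>"
      by (auto simp: block_starts_def)
    then show "\<exists>p. ?run a p" by (elim maj_switch_covered_by_run[OF assms(1)]) auto
  qed
  then obtain g where "\<forall>a\<in>?S. ?run a (g a)" by (rule bchoice[THEN exE])
  then have g: "\<And>a. a \<in> ?S \<Longrightarrow> ?run a (g a)" by blast
  have "inj_on (\<lambda>a. g a mod n) ?S"
  proof (rule inj_onI)
    fix a a' assume a: "a \<in> ?S" and a': "a' \<in> ?S" and eq: "g a mod n = g a' mod n"
    define k where "k = (g a' - g a) div n"
    have "n dvd g a' - g a" using mod_eq_dvd_iff[THEN iffD1, OF eq[symmetric]] .
    then have k: "g a' = g a + k * n" unfolding k_def by simp
    then have "g a = g a' + (- k) * n" by simp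
    then have "a' = a + k * n"
      using maj_block_starts_not_in_one_run[OF assms(1) a a', of "g a" k]
        maj_block_starts_not_in_one_run[OF assms(1) a' a, of "g a'" "- k"] g[OF a] g[OF a']
      by fastforce
    then have "a mod n = a' mod n" by simp
    then show "a = a'" using a a' by (simp add: block_starts_def)
  qed
  moreover have "(\<lambda>a. g a mod n) ` ?S \<subseteq> block_starts n \<beta> \<sigma>"
  proof
    fix x assume "x \<in> (\<lambda>a. g a mod n) ` ?S"
    then obtain a where a: "a \<in> ?S" and x: "x = g a mod n" by auto
    have "(x - 1) mod n = (g a - 1) mod n" using x by (simp add: mod_diff_left_eq)
    then show "x \<in> block_starts n \<beta> \<sigma>"
      using g[OF a] x assms(2) by (auto simp: block_starts_def)
  qed
  ultimately show ?thesis by (intro card_inj_on_le finite_block_starts)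
qed

lemma block_end_unique:
  assumes "(i, j) \<in> blocks n \<beta> \<sigma>" and "(i, j') \<in> blocks n \<beta> \<sigma>"
  shows "j = j'"
proof -
  have shorter: "\<not> (j - i) mod n < (j' - i) mod n"
    if b: "(i, j) \<in> blocks n \<beta> \<sigma>" and b': "(i, j') \<in> blocks n \<beta> \<sigma>" for j j'
  proof
    assume less: "(j - i) mod n < (j' - i) mod n"
    have "n > 0" using b by (simp add: blocks_def)
    then have "(j - i) mod n + 1 \<in> {0..(j' - i) mod n}" using less by simp
    then have "\<sigma> ((i + ((j - i) mod n + 1)) mod n) = \<beta>" using b' by (simp add: blocks_def)
    moreover have "(i + ((j - i) mod n + 1)) mod n = (j + 1) mod n"
      by (metis add.assoc add.commute diff_add_cancel mod_add_left_eq mod_add_right_eq)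
    ultimately show False using b by (simp add: blocks_def)
  qed
  have "(j - i) mod n = (j' - i) mod n"
    using shorter[OF assms] shorter[OF assms(2,1)] by simp
  then have "(j - i + i) mod n = (j' - i + i) mod n" by (metis mod_add_left_eq)
  then show ?thesis using assms by (simp add: blocks_def)
qed

lemma block_start_has_block:
  assumes "i \<in> block_starts n \<beta> \<sigma>"
  obtains j where "(i, j) \<in> blocks n \<beta> \<sigma>"
proof -
  have i: "0 \<le> i" "i < n" "\<sigma> i = \<beta>" "\<sigma> ((i - 1) mod n) \<noteq> \<beta>"
    using assms by (auto simp: block_starts_def)
  have "i \<le> i + n - 1" "\<sigma> (i mod n) = \<beta>" using i by simp_all
  moreover have "(i + n - 1) mod n = (i - 1) mod n"
    using mod_add_self2[of "i - 1" n] by (simp add: algebra_simps)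
  then have "\<sigma> ((i + n - 1) mod n) \<noteq> \<beta>" using i(4) by simp
  ultimately obtain m where m: "i \<le> m" "m < i + n - 1" "\<forall>k\<in>{i..m}. \<sigma> (k mod n) = \<beta>"
      "\<sigma> ((m + 1) mod n) \<noteq> \<beta>"
    using int_first_exit[where P = "\<lambda>k. \<sigma> (k mod n) = \<beta>"] by metis
  have len: "(m mod n - i) mod n = m - i"
    using m(1,2) by (simp add: mod_diff_left_eq)
  have "(i, m mod n) \<in> blocks n \<beta> \<sigma>"
    unfolding blocks_def
  proof (simp add: len, intro conjI ballI)
    show "0 \<le> i" "i < n" "0 \<le> m mod n" "m mod n < n" using i by simp_all
    show "\<sigma> ((i - 1) mod n) = (\<not> \<beta>)" using i(4) by simp
    show "\<sigma> ((m mod n + 1) mod n) = (\<not> \<beta>)" using m(4) by (simp add: mod_add_left_eq)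
    fix k assume "k \<in> {0..m - i}"
    then show "\<sigma> ((i + k) mod n) = \<beta>" using m(3) by simp
  qed
  then show ?thesis by (fact that)
qed

lemma card_blocks_eq_card_block_starts: "card (blocks n \<beta> \<sigma>) = card (block_starts n \<beta> \<sigma>)"
proof (rule bij_betw_same_card[of fst], rule bij_betw_imageI)
  show "inj_on fst (blocks n \<beta> \<sigma>)"
    by (rule inj_onI) (metis block_end_unique prod.collapse)
  show "fst ` blocks n \<beta> \<sigma> = block_starts n \<beta> \<sigma>"
  proof
    show "fst ` blocks n \<beta> \<sigma> \<subseteq> block_starts n \<beta> \<sigma>"
      by (force simp: blocks_def block_starts_def)
    show "block_starts n \<beta> \<sigma> \<subseteq> fst ` blocks n \<beta> \<sigma>"
      by (metis block_start_has_block fst_conv image_eqI subsetI)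
  qed
qed

lemma card_blocks_maj_le:
  assumes "r \<ge> 0" and "n \<ge> 1"
  shows "card (blocks n \<beta> (maj r n \<sigma>)) \<le> card (blocks n \<beta> \<sigma>)"
  using card_block_starts_maj_le[OF assms] by (simp add: card_blocks_eq_card_block_starts)

lemma blocks_cong:
  assumes "\<forall>i\<in>{0..<n}. \<sigma> i = \<tau> i"
  shows "blocks n \<beta> \<sigma> = blocks n \<beta> \<tau>"
proof -
  have "\<sigma> (x mod n) = \<tau> (x mod n)" if "0 < n" for x
    using assms that by simp
  then show ?thesis unfolding blocks_def by fastforce
qed

lemma card_all_blocks:
  "card (all_blocks n \<sigma>) = card (blocks n False \<sigma>) + card (blocks n True \<sigma>)"
proof -
  have "finite (blocks n \<beta> \<sigma>)" for \<beta>
    by (rule finite_subset[of _ "{0..<n} \<times> {0..<n}"]) (auto simp: blocks_def)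
  moreover have "blocks n False \<sigma> \<inter> blocks n True \<sigma> = {}"
    by (force simp: blocks_def)
  ultimately show ?thesis unfolding all_blocks_def by (simp add: card_Un_disjoint)
qed

theorem claim16:
  fixes r n :: int and \<sigma> \<sigma>' :: "int \<Rightarrow> bool"
  assumes "r \<ge> 1" and "n \<ge> 1" and "tp_pair r n \<sigma> \<sigma>'"
  shows "card (all_blocks n \<sigma>) = card (all_blocks n \<sigma>')"
proof -
  have "\<forall>i\<in>{0..<n}. \<sigma>' i = maj r n \<sigma> i" "\<forall>i\<in>{0..<n}. \<sigma> i = maj r n \<sigma>' i"
    using assms(3) by (simp_all add: tp_pair_def)
  then have "blocks n \<beta> \<sigma>' = blocks n \<beta> (maj r n \<sigma>)" "blocks n \<beta> \<sigma> = blocks n \<beta> (maj r n \<sigma>')"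
    for \<beta> by (simp_all add: blocks_cong)
  moreover have "r \<ge> 0" using assms(1) by simp
  ultimately have "card (blocks n \<beta> \<sigma>') = card (blocks n \<beta> \<sigma>)" for \<beta>
    using card_blocks_maj_le[of r n \<beta> \<sigma>] card_blocks_maj_le[of r n \<beta> \<sigma>'] assms(2)
    by (simp add: le_antisym)
  then show ?thesis by (simp add: card_all_blocks)
qed

end
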